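(* Let $\Bbbk$ be a field and let $B$ be a filtered bialgebra over $\Bbbk$ (filtration $B_0\subset B_1\subset\cdots$, $\bigcup_nB_n=B$). Suppose chosen subspaces $B(0):=B_0$ and, for $i\ge0$, $B(i+1)\subset\operatorname{Ker}\epsilon$ with $B_{i+1}=B_i\oplus B(i+1)$, and suppose $C\subset B$ is a basis of $B$ such that: $1\in C$; $xy\in C$ for all $x,y\in C$; every element of $C$ lies in some $B(n)$; for every $x\in C$, $\Delta(x)$ is a sum of terms $a\otimes b$ with $a,b\in C$; and for every $x\in C\cap B(n)$ the projections $\Delta_{0,n}(x)$ and $\Delta_{n,0}(x)$ of $\Delta(x)$ onto $B(0)\otimes B(n)$ and $B(n)\otimes B(0)$ are of the form $\Delta_{0,n}(x)=\operatorname{in}(x)\otimes x$ and $\Delta_{n,0}(x)=x\otimes\operatorname{out}(x)$ with $\operatorname{in}(x),\operatorname{out}(x)\in C$ group-like. Let $C_0:=C\cap B_0$. Then for all $x,y\in C$, if $xy\in C_0$ then $x\in C_0$ and $y\in C_0$.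
   Context: A filtered bialgebra is a bialgebra $(B,m,1,\Delta,\epsilon)$ with an increasing sequence of subspaces $B_0\subset B_1\subset\cdots$, $\bigcup_n B_n=B$, such that $1\in B_0$, $B_iB_j\subset B_{i+j}$ and $\Delta(B_n)\subset\sum_{i+j=n}B_i\otimes B_j$. An element $x\ne0$ is group-like if $\Delta(x)=x\otimes x$. *)

theory Defs
  imports Complex_Main
begin

text \<open>
  The ground field is a type 'k of class field; the bialgebra B is a
  type 'b of class ring_1 (its multiplication and unit), made into a 'k-vector space
  by a scalar multiplication sc.  Since there is no library tensor product, an element
  of B (x) B is represented through its canonical (injective) image in the dual of
  B* (x) B*: a tensor t is the function (f, g) |-> t(f, g) on pairs of linear
  functionals, and a pure tensor a (x) b is (f, g) |-> f a * g b.  Two such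
  representatives are identified (teq) when they agree on all pairs of linear
  functionals; values on non-linear functions are irrelevant junk.
\<close>

type_synonym ('k, 'b) tensor = "('b \<Rightarrow> 'k) \<Rightarrow> ('b \<Rightarrow> 'k) \<Rightarrow> 'k"

definition lin_fun :: "('k::field \<Rightarrow> 'b::ab_group_add \<Rightarrow> 'b) \<Rightarrow> ('b \<Rightarrow> 'k) \<Rightarrow> bool" where
  "lin_fun sc f \<longleftrightarrow> Vector_Spaces.linear sc (*) f"

definition tsum :: "('b \<times> 'b) list \<Rightarrow> ('k::comm_ring_1, 'b) tensor" where
  "tsum L = (\<lambda>f g. \<Sum>(a, b) \<leftarrow> L. f a * g b)"

definition tens :: "'b \<Rightarrow> 'b \<Rightarrow> ('k::comm_ring_1, 'b) tensor" where
  "tens a b = tsum [(a, b)]"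

definition teq :: "('k::field \<Rightarrow> 'b::ab_group_add \<Rightarrow> 'b) \<Rightarrow> ('k, 'b) tensor \<Rightarrow> ('k, 'b) tensor \<Rightarrow> bool" where
  "teq sc s t \<longleftrightarrow> (\<forall>f g. lin_fun sc f \<longrightarrow> lin_fun sc g \<longrightarrow> s f g = t f g)"

definition bialgebra ::
  "('k::field \<Rightarrow> 'b::ring_1 \<Rightarrow> 'b) \<Rightarrow> ('b \<Rightarrow> ('k, 'b) tensor) \<Rightarrow> ('b \<Rightarrow> 'k) \<Rightarrow> bool" where
  "bialgebra sc \<Delta> \<epsilon> \<longleftrightarrow>
     vector_space sc \<and>
     (\<forall>c x y. sc c (x * y) = sc c x * y \<and> sc c (x * y) = x * sc c y) \<and>
     \<comment> \<open>Delta maps B into B (x) B and is linear\<close>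
     (\<forall>x. \<exists>L. teq sc (\<Delta> x) (tsum L)) \<and>
     (\<forall>f g. lin_fun sc f \<longrightarrow> lin_fun sc g \<longrightarrow> lin_fun sc (\<lambda>x. \<Delta> x f g)) \<and>
     \<comment> \<open>coassociativity: (Delta (x) id) Delta = (id (x) Delta) Delta\<close>
     (\<forall>x f g h. lin_fun sc f \<longrightarrow> lin_fun sc g \<longrightarrow> lin_fun sc h \<longrightarrow>
        \<Delta> x (\<lambda>a. \<Delta> a f g) h = \<Delta> x f (\<lambda>b. \<Delta> b g h)) \<and>
     \<comment> \<open>counit\<close>
     lin_fun sc \<epsilon> \<and>
     (\<forall>x f. lin_fun sc f \<longrightarrow> \<Delta> x \<epsilon> f = f x \<and> \<Delta> x f \<epsilon> = f x) \<and>
     \<comment> \<open>Delta and epsilon are algebra maps\<close>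
     (\<forall>x y L M. teq sc (\<Delta> x) (tsum L) \<longrightarrow> teq sc (\<Delta> y) (tsum M) \<longrightarrow>
        teq sc (\<Delta> (x * y)) (tsum [(a * c, b * d). (a, b) \<leftarrow> L, (c, d) \<leftarrow> M])) \<and>
     teq sc (\<Delta> 1) (tens 1 1) \<and>
     (\<forall>x y. \<epsilon> (x * y) = \<epsilon> x * \<epsilon> y) \<and> \<epsilon> 1 = 1"

definition filtered_bialgebra ::
  "('k::field \<Rightarrow> 'b::ring_1 \<Rightarrow> 'b) \<Rightarrow> ('b \<Rightarrow> ('k, 'b) tensor) \<Rightarrow> ('b \<Rightarrow> 'k) \<Rightarrow> (nat \<Rightarrow> 'b set) \<Rightarrow> bool" where
  "filtered_bialgebra sc \<Delta> \<epsilon> Fil \<longleftrightarrow>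
     bialgebra sc \<Delta> \<epsilon> \<and>
     (\<forall>n. module.subspace sc (Fil n)) \<and>
     (\<forall>n. Fil n \<subseteq> Fil (Suc n)) \<and>
     (\<Union>n. Fil n) = UNIV \<and>
     1 \<in> Fil 0 \<and>
     (\<forall>i j. \<forall>x\<in>Fil i. \<forall>y\<in>Fil j. x * y \<in> Fil (i + j)) \<and>
     (\<forall>n. \<forall>x\<in>Fil n. \<exists>L. teq sc (\<Delta> x) (tsum L) \<and>
        (\<forall>(a, b)\<in>set L. \<exists>i j. i + j = n \<and> a \<in> Fil i \<and> b \<in> Fil j))"

definition filtration_splitting ::
  "('k::field \<Rightarrow> 'b::ring_1 \<Rightarrow> 'b) \<Rightarrow> ('b \<Rightarrow> 'k) \<Rightarrow> (nat \<Rightarrow> 'b set) \<Rightarrow> (nat \<Rightarrow> 'b set) \<Rightarrow> bool" where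
  "filtration_splitting sc \<epsilon> Fil D \<longleftrightarrow>
     D 0 = Fil 0 \<and>
     (\<forall>i. module.subspace sc (D (Suc i)) \<and>
          D (Suc i) \<subseteq> {x. \<epsilon> x = 0} \<and>
          Fil i \<inter> D (Suc i) = {0} \<and>
          Fil (Suc i) = {a + b | a b. a \<in> Fil i \<and> b \<in> D (Suc i)})"

definition dproj :: "('k::field \<Rightarrow> 'b::ab_group_add \<Rightarrow> 'b) \<Rightarrow> (nat \<Rightarrow> 'b set) \<Rightarrow> nat \<Rightarrow> 'b \<Rightarrow> 'b" where
  "dproj sc D i v = (THE w. w \<in> D i \<and> v - w \<in> module.span sc (\<Union>j\<in>-{i}. D j))"

text \<open>Projection of B (x) B onto B(i) (x) B(j), i.e. dproj_i (x) dproj_j.\<close>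
definition tproj :: "('k::field \<Rightarrow> 'b::ab_group_add \<Rightarrow> 'b) \<Rightarrow> (nat \<Rightarrow> 'b set) \<Rightarrow> nat \<Rightarrow> nat \<Rightarrow>
    ('k, 'b) tensor \<Rightarrow> ('k, 'b) tensor" where
  "tproj sc D i j t = (\<lambda>f g. t (f \<circ> dproj sc D i) (g \<circ> dproj sc D j))"

definition grouplike :: "('k::field \<Rightarrow> 'b::ring_1 \<Rightarrow> 'b) \<Rightarrow> ('b \<Rightarrow> ('k, 'b) tensor) \<Rightarrow> 'b \<Rightarrow> bool" where
  "grouplike sc \<Delta> x \<longleftrightarrow> x \<noteq> 0 \<and> teq sc (\<Delta> x) (tens x x)"

end

theory Submission
  imports Defs
begin

text \<open>
  For z in C \<inter> B_0 the coproduct already lies in B(0) \<otimes> B(0), so the hypothesis on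
  \<Delta>_{0,0} gives \<Delta>(z) = z \<otimes> out(z); applying \<epsilon> \<otimes> r for a functional r with r z \<noteq> 0 and
  using the counit axiom yields r z = \<epsilon>(z) r(out z), hence \<epsilon>(z) \<noteq> 0.  If xy \<in> C_0 then
  \<epsilon>(x)\<epsilon>(y) = \<epsilon>(xy) \<noteq> 0, while every element of C outside B(0) lies in some
  B(n+1) \<subseteq> Ker \<epsilon>; so x and y lie in B(0) = B_0.
\<close>

lemma (in vector_space) exists_linear_functional_nonzero:
  assumes "x \<noteq> 0"
  obtains f where "Vector_Spaces.linear scale (*) f" "f x \<noteq> 0"
proof -
  obtain B where B: "independent B" "UNIV \<subseteq> span B"
    using basis_exists[of UNIV] by blast
  have "\<exists>b. representation B x b \<noteq> 0"
  proof (rule ccontr)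
    assume "\<not> ?thesis"
    then have "(\<Sum>b | representation B x b \<noteq> 0. scale (representation B x b) b) = 0"
      by simp
    moreover have "x \<in> span B" using B(2) by blast
    ultimately show False using sum_nonzero_representation_eq[OF B(1)] assms by simp
  qed
  then obtain b where "representation B x b \<noteq> 0" ..
  moreover have "Vector_Spaces.linear scale (*) (\<lambda>v. representation B v b)"
    using linear_representation[OF B(1)] B(2) by auto
  ultimately show thesis using that by blast
qed

locale split_filtration = vector_space +
  fixes Fil D :: "nat \<Rightarrow> 'b set"
  assumes Fil_subspace: "subspace (Fil n)"
    and Fil_exhaustive: "(\<Union>n. Fil n) = UNIV"
    and D_zero: "D 0 = Fil 0"
    and D_Suc_subspace: "subspace (D (Suc i))"
    and Fil_inter_D_Suc: "Fil i \<inter> D (Suc i) = {0}"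
    and Fil_Suc: "Fil (Suc i) = {a + b | a b. a \<in> Fil i \<and> b \<in> D (Suc i)}"
begin

lemma D_Suc_subset_Fil_Suc: "D (Suc i) \<subseteq> Fil (Suc i)"
proof
  fix x assume "x \<in> D (Suc i)"
  moreover have "0 \<in> Fil i" using Fil_subspace subspace_0 by blast
  ultimately have "0 + x \<in> Fil (Suc i)" unfolding Fil_Suc by blast
  then show "x \<in> Fil (Suc i)" by simp
qed

lemma Fil_mono: "m \<le> n \<Longrightarrow> Fil m \<subseteq> Fil n"
proof (rule lift_Suc_mono_le[of Fil])
  show "Fil i \<subseteq> Fil (Suc i)" for i
  proof
    fix x assume "x \<in> Fil i"
    moreover have "0 \<in> D (Suc i)" using D_Suc_subspace subspace_0 by blast
    ultimately have "x + 0 \<in> Fil (Suc i)" unfolding Fil_Suc by blast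
    then show "x \<in> Fil (Suc i)" by simp
  qed
qed

lemma span_D_upto_subset_Fil: "span (\<Union>j\<in>{1..N}. D j) \<subseteq> Fil N"
proof (rule span_minimal[OF _ Fil_subspace], safe)
  fix j x assume j: "j \<in> {1..N}" and x: "x \<in> D j"
  then obtain i where "j = Suc i" by (cases j) auto
  with j x D_Suc_subset_Fil_Suc[of i] Fil_mono[of j N] show "x \<in> Fil N" by auto
qed

lemma Fil_zero_inter_span_D_upto: "Fil 0 \<inter> span (\<Union>j\<in>{1..N}. D j) \<subseteq> {0}"
proof (induction N)
  case 0
  then show ?case by simp
next
  case (Suc N)
  show ?case
  proof
    fix w assume w: "w \<in> Fil 0 \<inter> span (\<Union>j\<in>{1..Suc N}. D j)"
    have "(\<Union>j\<in>{1..Suc N}. D j) = (\<Union>j\<in>{1..N}. D j) \<union> D (Suc N)"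
      by (auto simp: le_Suc_eq) (metis atLeastAtMost_iff le_refl Suc_le_mono le0)
    moreover have "span (D (Suc N)) = D (Suc N)" using D_Suc_subspace by simp
    ultimately have "span (\<Union>j\<in>{1..Suc N}. D j) =
        {t + d | t d. t \<in> span (\<Union>j\<in>{1..N}. D j) \<and> d \<in> D (Suc N)}"
      by (simp only: span_Un)
    with w obtain t d where t: "t \<in> span (\<Union>j\<in>{1..N}. D j)" and d: "d \<in> D (Suc N)"
      and w_eq: "w = t + d" by auto
    have "w \<in> Fil N" using w Fil_mono[of 0 N] by auto
    moreover have "t \<in> Fil N" using span_D_upto_subset_Fil t by auto
    ultimately have "d \<in> Fil N" using w_eq subspace_diff[OF Fil_subspace[of N], of w t] by simp
    with Fil_inter_D_Suc[of N] d have "d = 0" by auto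
    with w w_eq t Suc.IH show "w \<in> {0}" by auto
  qed
qed

lemma span_D_positive_finite_stage:
  "v \<in> span (\<Union>j\<in>-{0}. D j) \<Longrightarrow> \<exists>N. v \<in> span (\<Union>j\<in>{1..N}. D j)"
proof (induction rule: span_induct_alt)
  case base
  show ?case using span_zero by blast
next
  case (step c x y)
  then obtain N j where N: "y \<in> span (\<Union>j\<in>{1..N}. D j)" and j: "j \<noteq> 0" "x \<in> D j" by auto
  let ?M = "max N j"
  have "span (\<Union>j\<in>{1..N}. D j) \<subseteq> span (\<Union>j\<in>{1..?M}. D j)"
    by (intro span_mono UN_mono) auto
  moreover have "x \<in> span (\<Union>j\<in>{1..?M}. D j)"
    using j by (intro span_base) auto
  ultimately have "scale c x + y \<in> span (\<Union>j\<in>{1..?M}. D j)"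
    using N by (intro span_add span_scale) auto
  then show ?case by blast
qed

lemma Fil_zero_inter_span_D_positive: "Fil 0 \<inter> span (\<Union>j\<in>-{0}. D j) \<subseteq> {0}"
  using span_D_positive_finite_stage Fil_zero_inter_span_D_upto by blast

lemma Fil_decompose: "v \<in> Fil n \<Longrightarrow> \<exists>w\<in>Fil 0. v - w \<in> span (\<Union>j\<in>-{0}. D j)"
proof (induction n arbitrary: v)
  case 0
  then show ?case using span_zero by force
next
  case (Suc n)
  then obtain a b where ab: "a \<in> Fil n" "b \<in> D (Suc n)" "v = a + b"
    unfolding Fil_Suc by blast
  then obtain w where w: "w \<in> Fil 0" "a - w \<in> span (\<Union>j\<in>-{0}. D j)"
    using Suc.IH by blast
  have "b \<in> span (\<Union>j\<in>-{0}. D j)" using ab(2) by (intro span_base) auto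
  with w have "(a - w) + b \<in> span (\<Union>j\<in>-{0}. D j)" by (intro span_add)
  with w ab show ?case by (auto simp: algebra_simps)
qed

lemma ex1_D_zero_component: "\<exists>!w. w \<in> D 0 \<and> v - w \<in> span (\<Union>j\<in>-{0}. D j)"
proof -
  obtain n where "v \<in> Fil n" using Fil_exhaustive by blast
  then obtain w where w: "w \<in> Fil 0" "v - w \<in> span (\<Union>j\<in>-{0}. D j)"
    using Fil_decompose by blast
  show ?thesis
  proof (rule ex1I[of _ w])
    show "w \<in> D 0 \<and> v - w \<in> span (\<Union>j\<in>-{0}. D j)" using w D_zero by simp
  next
    fix w' assume w': "w' \<in> D 0 \<and> v - w' \<in> span (\<Union>j\<in>-{0}. D j)"
    have "w' - w \<in> Fil 0" using w w' D_zero subspace_diff[OF Fil_subspace] by blast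
    moreover have "(v - w) - (v - w') \<in> span (\<Union>j\<in>-{0}. D j)" using w w' span_diff by blast
    ultimately show "w' = w" using Fil_zero_inter_span_D_positive by (auto simp: algebra_simps)
  qed
qed

lemma dproj_zero_eqI:
  "w \<in> Fil 0 \<Longrightarrow> v - w \<in> span (\<Union>j\<in>-{0}. D j) \<Longrightarrow> dproj scale D 0 v = w"
  unfolding dproj_def using ex1_D_zero_component D_zero by (intro the1_equality) auto

lemma dproj_zero_component:
  "dproj scale D 0 v \<in> Fil 0 \<and> v - dproj scale D 0 v \<in> span (\<Union>j\<in>-{0}. D j)"
  unfolding dproj_def using theI'[OF ex1_D_zero_component] D_zero by simp

lemma dproj_zero_Fil_zero: "a \<in> Fil 0 \<Longrightarrow> dproj scale D 0 a = a"
  by (rule dproj_zero_eqI) (auto simp: span_zero)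

lemma linear_dproj_zero: "Vector_Spaces.linear scale scale (dproj scale D 0)"
  unfolding Vector_Spaces.linear_iff
proof (intro conjI allI vector_space_axioms)
  fix x y
  show "dproj scale D 0 (x + y) = dproj scale D 0 x + dproj scale D 0 y"
  proof (rule dproj_zero_eqI)
    show "dproj scale D 0 x + dproj scale D 0 y \<in> Fil 0"
      using dproj_zero_component subspace_add[OF Fil_subspace] by blast
    have "(x - dproj scale D 0 x) + (y - dproj scale D 0 y) \<in> span (\<Union>j\<in>-{0}. D j)"
      using dproj_zero_component[of x] dproj_zero_component[of y] by (intro span_add) auto
    then show "x + y - (dproj scale D 0 x + dproj scale D 0 y) \<in> span (\<Union>j\<in>-{0}. D j)"
      by (simp add: algebra_simps)
  qed
next
  fix c x
  show "dproj scale D 0 (scale c x) = scale c (dproj scale D 0 x)"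
    using dproj_zero_component[of x] subspace_scale[OF Fil_subspace] span_scale
    by (intro dproj_zero_eqI) (auto simp: scale_right_diff_distrib[symmetric])
qed

end

lemma split_filtration_if_filtration_splitting:
  assumes "filtered_bialgebra sc \<Delta> \<epsilon> Fil" and "filtration_splitting sc \<epsilon> Fil D"
  shows "split_filtration sc Fil D"
  using assms
  unfolding split_filtration_def split_filtration_axioms_def filtered_bialgebra_def
    filtration_splitting_def bialgebra_def
  by auto

lemma teq_trans: "teq sc r s \<Longrightarrow> teq sc s t \<Longrightarrow> teq sc r t"
  unfolding teq_def by simp

lemma teq_sym: "teq sc s t \<Longrightarrow> teq sc t s"
  unfolding teq_def by simp

text \<open>The coproduct of B_0 lands in B_0 \<otimes> B_0, on which tproj 0 0 acts as the identity.\<close>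
lemma teq_tproj_zero_Delta_Fil_zero:
  assumes filt: "filtered_bialgebra sc \<Delta> \<epsilon> Fil"
    and split: "filtration_splitting sc \<epsilon> Fil D"
    and x: "x \<in> Fil 0"
  shows "teq sc (tproj sc D 0 0 (\<Delta> x)) (\<Delta> x)"
  unfolding teq_def
proof (intro allI impI)
  interpret split_filtration sc Fil D
    using split_filtration_if_filtration_splitting[OF filt split] .
  let ?P = "dproj sc D 0"
  fix f g :: "'b \<Rightarrow> 'a" assume f: "lin_fun sc f" and g: "lin_fun sc g"
  have comp: "lin_fun sc (h \<circ> ?P)" if "lin_fun sc h" for h
    using that Vector_Spaces.linear_compose[OF linear_dproj_zero] unfolding lin_fun_def by blast
  obtain L where L: "teq sc (\<Delta> x) (tsum L)"
    and L_Fil: "\<forall>(a, b)\<in>set L. \<exists>i j. i + j = 0 \<and> a \<in> Fil i \<and> b \<in> Fil j"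
    using filt x unfolding filtered_bialgebra_def by blast
  have "tproj sc D 0 0 (\<Delta> x) f g = tsum L (f \<circ> ?P) (g \<circ> ?P)"
    using L comp f g by (simp add: tproj_def teq_def)
  also have "\<dots> = tsum L f g"
    unfolding tsum_def using L_Fil
    by (intro arg_cong[where f = sum_list] map_cong) (auto simp: dproj_zero_Fil_zero)
  also have "\<dots> = \<Delta> x f g"
    using L f g by (simp add: teq_def)
  finally show "tproj sc D 0 0 (\<Delta> x) f g = \<Delta> x f g" .
qed

lemma counit_nonzero_if_Delta_eq_tens:
  assumes bi: "bialgebra sc \<Delta> \<epsilon>" and x: "x \<noteq> 0" and \<Delta>x: "teq sc (\<Delta> x) (tens x h)"
  shows "\<epsilon> x \<noteq> 0"
proof -
  interpret vector_space sc using bi by (simp add: bialgebra_def)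
  obtain r where r: "lin_fun sc r" "r x \<noteq> 0"
    using exists_linear_functional_nonzero[OF x] unfolding lin_fun_def by blast
  have \<epsilon>: "lin_fun sc \<epsilon>" using bi by (simp add: bialgebra_def)
  have "r x = \<Delta> x \<epsilon> r" using bi r(1) by (simp add: bialgebra_def)
  also have "\<dots> = tens x h \<epsilon> r"
    using \<Delta>x \<epsilon> r(1) unfolding teq_def by blast
  also have "\<dots> = \<epsilon> x * r h" by (simp add: tens_def tsum_def)
  finally show ?thesis using r(2) by auto
qed

theorem lemma4p2:
  fixes sc :: "'k::field \<Rightarrow> 'b::ring_1 \<Rightarrow> 'b"
    and \<Delta> :: "'b \<Rightarrow> ('k, 'b) tensor"
    and \<epsilon> :: "'b \<Rightarrow> 'k"
    and Fil D :: "nat \<Rightarrow> 'b set"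
    and C :: "'b set"
  assumes filt: "filtered_bialgebra sc \<Delta> \<epsilon> Fil"
    and split: "filtration_splitting sc \<epsilon> Fil D"
    and basis_indep: "\<not> module.dependent sc C"
    and basis_span: "module.span sc C = UNIV"
    and one_C: "1 \<in> C"
    and mult_C: "\<forall>x\<in>C. \<forall>y\<in>C. x * y \<in> C"
    and graded_C: "\<forall>x\<in>C. \<exists>n. x \<in> D n"
    and coprod_C: "\<forall>x\<in>C. \<exists>L. set L \<subseteq> C \<times> C \<and> teq sc (\<Delta> x) (tsum L)"
    and in_out: "\<forall>n. \<forall>x\<in>C \<inter> D n. \<exists>g h. g \<in> C \<and> h \<in> C \<and>
                    grouplike sc \<Delta> g \<and> grouplike sc \<Delta> h \<and>
                    teq sc (tproj sc D 0 n (\<Delta> x)) (tens g x) \<and>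
                    teq sc (tproj sc D n 0 (\<Delta> x)) (tens x h)"
  shows "\<forall>x\<in>C. \<forall>y\<in>C. x * y \<in> C \<inter> Fil 0 \<longrightarrow> x \<in> C \<inter> Fil 0 \<and> y \<in> C \<inter> Fil 0"
proof (intro ballI impI)
  have bi: "bialgebra sc \<Delta> \<epsilon>" using filt by (simp add: filtered_bialgebra_def)
  interpret split_filtration sc Fil D
    using split_filtration_if_filtration_splitting[OF filt split] .
  have counit_nonzero: "\<epsilon> z \<noteq> 0" if z: "z \<in> C \<inter> Fil 0" for z
  proof -
    obtain h where "teq sc (tproj sc D 0 0 (\<Delta> z)) (tens z h)"
      using in_out z D_zero by blast
    then have "teq sc (\<Delta> z) (tens z h)"
      using teq_tproj_zero_Delta_Fil_zero[OF filt split] z by (blast intro: teq_trans teq_sym)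
    moreover have "z \<noteq> 0" using z basis_indep dependent_zero by blast
    ultimately show ?thesis using counit_nonzero_if_Delta_eq_tens[OF bi] by blast
  qed
  have Fil_zero_if_counit: "c \<in> Fil 0" if "c \<in> C" "\<epsilon> c \<noteq> 0" for c
  proof -
    obtain n where "c \<in> D n" using graded_C \<open>c \<in> C\<close> by blast
    with that split D_zero show ?thesis
      by (cases n) (auto simp: filtration_splitting_def)
  qed
  fix x y assume "x \<in> C" "y \<in> C" "x * y \<in> C \<inter> Fil 0"
  then have "\<epsilon> x * \<epsilon> y \<noteq> 0"
    using counit_nonzero[of "x * y"] bi by (simp add: bialgebra_def)
  with \<open>x \<in> C\<close> \<open>y \<in> C\<close> show "x \<in> C \<inter> Fil 0 \<and> y \<in> C \<inter> Fil 0"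
    using Fil_zero_if_counit by auto
qed

end
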